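(* A sequence $(k;a_1,\dots,a_n;b,\beta)$ of non-negative integers is the generalized inversion table of some $(N,E)\in\mathcal{N}_{n,1}$ if and only if: (i) $3\le k\le n$; (ii) $0\le a_i\le i-1$ for all $1\le i\le n$; (iii) $a_{k-1}<a_k$; (iv) $a_{k-1}+\beta<a_k+b\le k-2$. Moreover, in that case $(N,E)$ is unique.
   Context: An alternating sign matrix (ASM) of order $n$ is an $n\times n$ matrix $A=(a_{ij})$ with entries in $\{-1,0,1\}$ such that in every row and every column the nonzero entries alternate in sign, the first and the last nonzero entries being $1$. $\mathcal{A}_{n,1}$ denotes the set of order-$n$ ASMs having exactly one entry equal to $-1$. Let $A\in\mathcal{A}_{n,1}$. The opening column is the column containing the unique $-1$; the closing row is the row containing the $-1$; the opening row is the row of the $1$ of the opening column lying above the $-1$. The columns strictly to the left (resp. right) of the opening column form the left side (resp. right side). The closing row contains exactly two $1$'s, one in each side; the one in the right side is the closing $1$ and its column is the closing column. $A$ is neutral if the closing row is the row immediately below the opening row; $\mathcal{A}_{n,1}^{0}$ denotes the set of neutral elements of $\mathcal{A}_{n,1}$. For $N\in\mathcal{A}_{n,1}^{0}$: the leading $1$ is the highest $1$ in the left side strictly below the opening row; its column is the leading column; the leading cell consists of the entries strictly below the opening row and strictly between the leading column and the opening column, and $\ell(N)$ is the sum of its entries. The closing cell consists of the entries strictly below the closing row and strictly between the opening column and the closing column, and $c(N)$ is the sum of its entries. $\mathcal{N}_{n,1}=\{(N,E)\,:\,N\in\mathcal{A}_{n,1}^{0},\ E\in\mathbb{Z},\ -\ell(N)\le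 E\le c(N)\}$. Generalized inversion table: for $(N,E)\in\mathcal{N}_{n,1}$, let $n+1-k$ be the index of the opening row of $N$ (so the closing row is row $n+2-k$). For $1\le i\le n$, $a_i$ is the sum of the entries of $N$ lying strictly below row $n+1-i$ and strictly to the left of the unique $1$ of row $n+1-i$ (for $i=k-1$, i.e. the closing row, the leftmost $1$ of that row is used). Let $b=c(N)$ and $\beta=E+\ell(N)$. The generalized inversion table of $(N,E)$ is $(k;a_1,\dots,a_n;b,\beta)$. *)

theory Defs
  imports Main
begin

(* Matrices of order n are functions nat => nat => int, indices 1..n (row, column),
   required to vanish outside {1..n} x {1..n}. Row 1 is the top row, column 1 the leftmost. *)

definition alternating :: "int list \<Rightarrow> bool" where
  "alternating xs \<longleftrightarrow> xs \<noteq> [] \<and> hd xs = 1 \<and> last xs = 1 \<and>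
     (\<forall>i. Suc i < length xs \<longrightarrow> xs ! Suc i = - (xs ! i))"

definition is_asm :: "nat \<Rightarrow> (nat \<Rightarrow> nat \<Rightarrow> int) \<Rightarrow> bool" where
  "is_asm n A \<longleftrightarrow>
     (\<forall>i j. A i j \<in> {-1, 0, 1}) \<and>
     (\<forall>i j. (i \<notin> {1..n} \<or> j \<notin> {1..n}) \<longrightarrow> A i j = 0) \<and>
     (\<forall>i\<in>{1..n}. alternating [A i j. j \<leftarrow> [1..<n+1], A i j \<noteq> 0]) \<and>
     (\<forall>j\<in>{1..n}. alternating [A i j. i \<leftarrow> [1..<n+1], A i j \<noteq> 0])"

definition asm_one :: "nat \<Rightarrow> (nat \<Rightarrow> nat \<Rightarrow> int) set" where
  "asm_one n = {A. is_asm n A \<and>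
      card {(i, j). i \<in> {1..n} \<and> j \<in> {1..n} \<and> A i j = -1} = 1}"

definition minus_pos :: "nat \<Rightarrow> (nat \<Rightarrow> nat \<Rightarrow> int) \<Rightarrow> nat \<times> nat" where
  "minus_pos n A = (THE p. fst p \<in> {1..n} \<and> snd p \<in> {1..n} \<and> A (fst p) (snd p) = -1)"

definition closing_row :: "nat \<Rightarrow> (nat \<Rightarrow> nat \<Rightarrow> int) \<Rightarrow> nat" where
  "closing_row n A = fst (minus_pos n A)"

definition opening_col :: "nat \<Rightarrow> (nat \<Rightarrow> nat \<Rightarrow> int) \<Rightarrow> nat" where
  "opening_col n A = snd (minus_pos n A)"

definition opening_row :: "nat \<Rightarrow> (nat \<Rightarrow> nat \<Rightarrow> int) \<Rightarrow> nat" where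
  "opening_row n A = (THE i. i < closing_row n A \<and> A i (opening_col n A) = 1)"

definition closing_col :: "nat \<Rightarrow> (nat \<Rightarrow> nat \<Rightarrow> int) \<Rightarrow> nat" where
  "closing_col n A = (THE j. opening_col n A < j \<and> A (closing_row n A) j = 1)"

definition neutral :: "nat \<Rightarrow> (nat \<Rightarrow> nat \<Rightarrow> int) \<Rightarrow> bool" where
  "neutral n A \<longleftrightarrow> closing_row n A = Suc (opening_row n A)"

definition asm_one_neutral :: "nat \<Rightarrow> (nat \<Rightarrow> nat \<Rightarrow> int) set" where
  "asm_one_neutral n = {A \<in> asm_one n. neutral n A}"

definition leading_row :: "nat \<Rightarrow> (nat \<Rightarrow> nat \<Rightarrow> int) \<Rightarrow> nat" where
  "leading_row n A = (LEAST i. opening_row n A < i \<and> (\<exists>j < opening_col n A. A i j = 1))"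

definition leading_col :: "nat \<Rightarrow> (nat \<Rightarrow> nat \<Rightarrow> int) \<Rightarrow> nat" where
  "leading_col n A = (THE j. j < opening_col n A \<and> A (leading_row n A) j = 1)"

definition ell :: "nat \<Rightarrow> (nat \<Rightarrow> nat \<Rightarrow> int) \<Rightarrow> int" where
  "ell n A = (\<Sum>i\<in>{opening_row n A<..n}. \<Sum>j\<in>{leading_col n A<..<opening_col n A}. A i j)"

definition cN :: "nat \<Rightarrow> (nat \<Rightarrow> nat \<Rightarrow> int) \<Rightarrow> int" where
  "cN n A = (\<Sum>i\<in>{closing_row n A<..n}. \<Sum>j\<in>{opening_col n A<..<closing_col n A}. A i j)"

definition Nset :: "nat \<Rightarrow> ((nat \<Rightarrow> nat \<Rightarrow> int) \<times> int) set" where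
  "Nset n = {(N, E). N \<in> asm_one_neutral n \<and> - ell n N \<le> E \<and> E \<le> cN n N}"

definition one_col :: "nat \<Rightarrow> (nat \<Rightarrow> nat \<Rightarrow> int) \<Rightarrow> nat \<Rightarrow> nat" where
  "one_col n A r = (if r = closing_row n A then (LEAST j. A r j = 1) else (THE j. A r j = 1))"

definition a_entry :: "nat \<Rightarrow> (nat \<Rightarrow> nat \<Rightarrow> int) \<Rightarrow> nat \<Rightarrow> int" where
  "a_entry n A i = (\<Sum>r\<in>{n+1-i<..n}. \<Sum>j\<in>{1..<one_col n A (n+1-i)}. A r j)"

(* generalized inversion table (k; a_1..a_n; b, beta); the list a stores a_i at index i-1 *)
definition git :: "nat \<Rightarrow> (nat \<Rightarrow> nat \<Rightarrow> int) \<times> int \<Rightarrow> int \<times> int list \<times> int \<times> int" where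
  "git n NE = (case NE of (N, E) \<Rightarrow>
     (int n + 1 - int (opening_row n N), map (a_entry n N) [1..<n+1], cN n N, E + ell n N))"

end

theory Submission
  imports Defs "HOL-Combinatorics.Permutations"
begin

text \<open>
  A neutral matrix N with its -1 in the closing row r + 1 and the opening column c is a
  disguised permutation matrix: moving the 1 of the opening row r from column c to the closing
  column q, and keeping only the leading 1 (at column p) of the closing row, gives the permutation
  matrix of some \<sigma> with \<sigma> r = q, \<sigma> (r + 1) = p and p < c < q, where c = \<sigma> s for a row s
  below the closing row. The whole generalized inversion table is then expressed through the
  Lehmer code of \<sigma> and ranks in S = \<sigma> ` {r + 2..n}: a_i is the Lehmer code of \<sigma> at row
  n + 1 - i, except at the opening row where it is 1 + rank c; the Lehmer code at the closing
  and opening rows is rank p and 1 + rank q; finally b = rank q - rank c - 1 and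
  l(N) = rank c - rank p. Conditions (i)-(iv) say precisely that these numbers come from some
  p < c < q with p outside and c inside S. Since Lehmer codes are in bijection with
  permutations and an element of S is determined by its rank, every such table comes from
  exactly one pair (N, E).
\<close>

definition sign_word :: "nat \<Rightarrow> (nat \<Rightarrow> int) \<Rightarrow> int list" where
  "sign_word n v = [v j. j \<leftarrow> [1..<n+1], v j \<noteq> 0]"

lemma sign_word_conv_filter: "sign_word n v = map v (filter (\<lambda>j. v j \<noteq> 0) [1..<n+1])"
proof -
  have "[f x. x \<leftarrow> xs, P x] = map f (filter P xs)" for f :: "nat \<Rightarrow> int" and P xs
    by (induction xs) auto
  then show ?thesis unfolding sign_word_def .
qed

lemma is_asm_iff_sign_words:
  "is_asm n A \<longleftrightarrow>
     (\<forall>i j. A i j \<in> {-1, 0, 1}) \<and>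
     (\<forall>i j. (i \<notin> {1..n} \<or> j \<notin> {1..n}) \<longrightarrow> A i j = 0) \<and>
     (\<forall>i\<in>{1..n}. alternating (sign_word n (A i))) \<and>
     (\<forall>j\<in>{1..n}. alternating (sign_word n (\<lambda>i. A i j)))"
  unfolding is_asm_def sign_word_def ..

lemma sign_word_support:
  obtains F where "sign_word n v = map v F" "sorted_wrt (<) F" "set F = {j\<in>{1..n}. v j \<noteq> 0}"
proof
  show "sorted_wrt (<) (filter (\<lambda>j. v j \<noteq> 0) [1..<n+1])"
    using sorted_wrt_filter sorted_wrt_upt by blast
  show "set (filter (\<lambda>j. v j \<noteq> 0) [1..<n+1]) = {j\<in>{1..n}. v j \<noteq> 0}"
    by (auto simp del: upt_Suc)
qed (rule sign_word_conv_filter)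

lemma sign_word_eq_map:
  assumes "sorted_wrt (<) F" and "set F = {j\<in>{1..n}. v j \<noteq> 0}"
  shows "sign_word n v = map v F"
proof -
  obtain F' where F': "sign_word n v = map v F'" "sorted_wrt (<) F'" "set F' = {j\<in>{1..n}. v j \<noteq> 0}"
    by (rule sign_word_support)
  have "F' = F"
    using F'(2,3) assms by (simp add: strict_sorted_iff sorted_distinct_set_unique)
  then show ?thesis using F'(1) by simp
qed

lemma alternating_nth: "alternating xs \<Longrightarrow> i < length xs \<Longrightarrow> xs ! i = (-1) ^ i"
proof (induction i)
  case 0
  then show ?case by (cases xs) (auto simp: alternating_def)
next
  case (Suc i)
  then show ?case by (simp add: alternating_def)
qed

lemma alternating_odd_length:
  assumes "alternating xs"
  shows "odd (length xs)"
proof -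
  have "xs \<noteq> []" and "last xs = 1" using assms by (auto simp: alternating_def)
  then have "(-1::int) ^ (length xs - 1) = 1"
    using alternating_nth[OF assms, of "length xs - 1"] by (simp add: last_conv_nth)
  then have "even (length xs - 1)" by (metis neg_one_odd_power one_neq_neg_one)
  then show ?thesis using \<open>xs \<noteq> []\<close> by (cases "length xs") auto
qed

lemma alternating_without_minus_one:
  assumes "alternating xs" and "-1 \<notin> set xs"
  shows "xs = [1]"
proof -
  have "length xs = 1"
  proof (rule ccontr)
    assume "length xs \<noteq> 1"
    then have "1 < length xs" using alternating_odd_length[OF assms(1)] by presburger
    then show False using alternating_nth[OF assms(1), of 1] nth_mem[of 1 xs] assms(2) by simp
  qed
  then show ?thesis using assms(1) by (cases xs) (auto simp: alternating_def)
qed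

lemma alternating_with_single_minus_one:
  assumes alt: "alternating xs" and "-1 \<in> set xs"
    and single: "\<And>i j. i < length xs \<Longrightarrow> j < length xs \<Longrightarrow> xs ! i = -1 \<Longrightarrow> xs ! j = -1 \<Longrightarrow> i = j"
  shows "xs = [1, -1, 1]"
proof -
  have "xs \<noteq> [1]" using assms(2) by auto
  then have "length xs \<noteq> 1" using alt by (cases xs) (auto simp: alternating_def)
  moreover have "\<not> 3 < length xs"
    using single[of 1 3] alternating_nth[OF alt, of 1] alternating_nth[OF alt, of 3] by auto
  ultimately have "length xs = 3" using alternating_odd_length[OF alt] by presburger
  then show ?thesis
    using alternating_nth[OF alt, of 0] alternating_nth[OF alt, of 1] alternating_nth[OF alt, of 2]
    by (intro nth_equalityI) (auto simp: numeral_3_eq_3 numeral_2_eq_2 less_Suc_eq)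
qed

lemma alternating_sign_word_singleE:
  assumes "alternating (sign_word n v)" and "\<forall>j\<in>{1..n}. v j \<noteq> -1"
  obtains j0 where "j0 \<in> {1..n}" "\<forall>j\<in>{1..n}. v j = of_bool (j = j0)"
proof -
  obtain F where F: "sign_word n v = map v F" "set F = {j\<in>{1..n}. v j \<noteq> 0}"
    by (rule sign_word_support)
  have "map v F = [1]"
  proof (rule alternating_without_minus_one)
    show "-1 \<notin> set (map v F)" using assms(2) F(2) by auto
  qed (use assms(1) F(1) in simp)
  then obtain j0 where F_eq: "F = [j0]" and "v j0 = 1" by auto
  have support: "j \<in> {1..n} \<and> v j \<noteq> 0 \<longleftrightarrow> j = j0" for j
    using F(2) F_eq by (simp add: set_eq_iff)
  show thesis
  proof
    show "j0 \<in> {1..n}" using support by blast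
    show "\<forall>j\<in>{1..n}. v j = of_bool (j = j0)"
    proof
      fix j assume "j \<in> {1..n}"
      then show "v j = of_bool (j = j0)" using support[of j] \<open>v j0 = 1\<close> by (cases "j = j0") auto
    qed
  qed
qed

lemma alternating_sign_word_tripleE:
  assumes "alternating (sign_word n v)" and "c \<in> {1..n}" "v c = -1"
    and "\<forall>j\<in>{1..n}. j \<noteq> c \<longrightarrow> v j \<noteq> -1"
  obtains p q where "1 \<le> p" "p < c" "c < q" "q \<le> n"
    "\<forall>j\<in>{1..n}. v j = of_bool (j = p \<or> j = q) - of_bool (j = c)"
proof -
  obtain F where F: "sign_word n v = map v F" "sorted_wrt (<) F" "set F = {j\<in>{1..n}. v j \<noteq> 0}"
    by (rule sign_word_support)
  have "distinct F" using F(2) strict_sorted_iff by blast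
  have minus_at_c: "F ! i = c" if "i < length F" "v (F ! i) = -1" for i
    using that nth_mem[of i F] F(3) assms(4) by blast
  have "map v F = [1, -1, 1]"
  proof (rule alternating_with_single_minus_one)
    show "-1 \<in> set (map v F)" using assms(2,3) F(3) by force
    show "i = i'" if "i < length (map v F)" "i' < length (map v F)"
      "map v F ! i = -1" "map v F ! i' = -1" for i i'
      using that minus_at_c[of i] minus_at_c[of i'] \<open>distinct F\<close>
      by (auto simp: nth_eq_iff_index_eq)
  qed (use assms(1) F(1) in simp)
  then have "length (map v F) = 3" by simp
  then obtain p c' q where F_eq: "F = [p, c', q]" by (auto simp: numeral_3_eq_3 length_Suc_conv)
  have vals: "v p = 1" "v c' = -1" "v q = 1" using \<open>map v F = [1, -1, 1]\<close> F_eq by simp_all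
  have "c' = c" using minus_at_c[of 1] F_eq vals by simp
  have ordered: "p < c" "c < q" using F(2) F_eq \<open>c' = c\<close> by auto
  have support: "j \<in> {1..n} \<and> v j \<noteq> 0 \<longleftrightarrow> j = p \<or> j = c \<or> j = q" for j
    using F(3) F_eq \<open>c' = c\<close> by (simp add: set_eq_iff)
  show thesis
  proof
    show "1 \<le> p" "q \<le> n" using support by auto
    show "p < c" "c < q" by (fact ordered)+
    show "\<forall>j\<in>{1..n}. v j = of_bool (j = p \<or> j = q) - of_bool (j = c)"
    proof
      fix j assume "j \<in> {1..n}"
      then show "v j = of_bool (j = p \<or> j = q) - of_bool (j = c)"
        using support[of j] vals ordered \<open>c' = c\<close> by (cases "j \<in> {p, c, q}") auto
    qed
  qed
qed

lemma alternating_sign_word_singleI: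
  assumes "j0 \<in> {1..n}" and "\<forall>j\<in>{1..n}. v j = of_bool (j = j0)"
  shows "alternating (sign_word n v)"
proof -
  have "sign_word n v = map v [j0]"
    by (rule sign_word_eq_map) (use assms in auto)
  then show ?thesis using assms by (simp add: alternating_def)
qed

lemma alternating_sign_word_tripleI:
  assumes "1 \<le> p" "p < c" "c < q" "q \<le> n"
    and v: "\<forall>j\<in>{1..n}. v j = of_bool (j = p \<or> j = q) - of_bool (j = c)"
  shows "alternating (sign_word n v)"
proof -
  have vals: "v p = 1" "v c = -1" "v q = 1" using assms by auto
  have "set [p, c, q] = {j\<in>{1..n}. v j \<noteq> 0}"
  proof (rule set_eqI)
    fix j
    show "j \<in> set [p, c, q] \<longleftrightarrow> j \<in> {j\<in>{1..n}. v j \<noteq> 0}"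
      using assms(1-4) vals v by (cases "j \<in> {p, c, q}") auto
  qed
  then have "sign_word n v = map v [p, c, q]"
    using assms(2,3) by (intro sign_word_eq_map) auto
  also have "\<dots> = [1, -1, 1]" using vals by simp
  finally show ?thesis
    unfolding alternating_def by (auto simp: less_Suc_eq numeral_3_eq_3)
qed

definition rank_in :: "'a::linorder set \<Rightarrow> 'a \<Rightarrow> nat" where
  "rank_in S x = card {y\<in>S. y < x}"

lemma rank_in_mono: "finite S \<Longrightarrow> x \<le> x' \<Longrightarrow> rank_in S x \<le> rank_in S x'"
  unfolding rank_in_def by (rule card_mono) auto

lemma rank_in_strict_mono: "finite S \<Longrightarrow> x \<in> S \<Longrightarrow> x < x' \<Longrightarrow> rank_in S x < rank_in S x'"
  unfolding rank_in_def by (rule psubset_card_mono) auto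

lemma rank_in_less_card: "finite S \<Longrightarrow> x \<in> S \<Longrightarrow> rank_in S x < card S"
  unfolding rank_in_def by (rule psubset_card_mono) auto

lemma rank_in_le_card: "finite S \<Longrightarrow> rank_in S x \<le> card S"
  unfolding rank_in_def by (rule card_mono) auto

lemma inj_on_rank_in: "finite S \<Longrightarrow> inj_on (rank_in S) S"
  by (rule inj_onI, rule ccontr) (auto simp: neq_iff dest: rank_in_strict_mono)

lemma rank_in_image: "finite S \<Longrightarrow> rank_in S ` S = {..<card S}"
  using card_image[OF inj_on_rank_in] rank_in_less_card
  by (intro card_subset_eq) (auto simp: image_subset_iff)

lemma rank_in_insert:
  assumes "finite S" "x \<notin> S"
  shows "rank_in (insert x S) y = rank_in S y + of_bool (x < y)"
proof (cases "x < y")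
  case True
  then have "{z\<in>insert x S. z < y} = insert x {z\<in>S. z < y}" by auto
  then show ?thesis unfolding rank_in_def using assms True by simp
next
  case False
  then have "{z\<in>insert x S. z < y} = {z\<in>S. z < y}" by auto
  then show ?thesis unfolding rank_in_def using False by simp
qed

lemma rank_in_add_card_between:
  assumes "finite S" "x \<le> x'"
  shows "rank_in S x' = rank_in S x + card {y\<in>S. x \<le> y \<and> y < x'}"
proof -
  have "{y\<in>S. y < x'} = {y\<in>S. y < x} \<union> {y\<in>S. x \<le> y \<and> y < x'}" using assms(2) by auto
  also have "card \<dots> = card {y\<in>S. y < x} + card {y\<in>S. x \<le> y \<and> y < x'}"
    using assms(1) by (intro card_Un_disjoint) auto
  finally show ?thesis unfolding rank_in_def .
qed

definition lehmer :: "nat \<Rightarrow> (nat \<Rightarrow> nat) \<Rightarrow> nat \<Rightarrow> nat" where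
  "lehmer n \<sigma> R = card {R'\<in>{R<..n}. \<sigma> R' < \<sigma> R}"

lemma lehmer_le: "lehmer n \<sigma> R \<le> n - R"
proof -
  have "lehmer n \<sigma> R \<le> card {R<..n}" unfolding lehmer_def by (rule card_mono) auto
  then show ?thesis by simp
qed

lemma lehmer_eq_rank_in:
  assumes "inj \<sigma>"
  shows "lehmer n \<sigma> R = rank_in (\<sigma> ` {R<..n}) (\<sigma> R)"
proof -
  have "{y\<in>\<sigma> ` {R<..n}. y < \<sigma> R} = \<sigma> ` {R'\<in>{R<..n}. \<sigma> R' < \<sigma> R}" by auto
  then show ?thesis
    unfolding lehmer_def rank_in_def using assms by (simp add: card_image inj_on_subset)
qed

lemma lehmer_eq_rank_in_atLeast:
  assumes "inj \<sigma>"
  shows "lehmer n \<sigma> R = rank_in (\<sigma> ` {R..n}) (\<sigma> R)"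
proof (cases "R \<le> n")
  case True
  then have "{R..n} = insert R {R<..n}" by auto
  then have "\<sigma> ` {R..n} = insert (\<sigma> R) (\<sigma> ` {R<..n})" by simp
  moreover have "\<sigma> R \<notin> \<sigma> ` {R<..n}" using assms by (auto simp: inj_eq)
  ultimately show ?thesis using lehmer_eq_rank_in[OF assms] by (simp add: rank_in_insert)
next
  case False
  then show ?thesis by (simp add: lehmer_def rank_in_def)
qed

lemma permutes_image_atLeastAtMost:
  fixes \<pi> :: "nat \<Rightarrow> nat"
  assumes "\<pi> permutes {1..n}" and "R0 \<in> {1..n}"
  shows "\<pi> ` {R0..n} = {1..n} - \<pi> ` {1..<R0}"
proof -
  have "{R0..n} = {1..n} - {1..<R0}" using assms(2) by auto
  moreover have "\<pi> ` ({1..n} - {1..<R0}) = \<pi> ` {1..n} - \<pi> ` {1..<R0}"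
    by (rule inj_on_image_set_diff[where C = "{1..n}"])
      (use permutes_inj_on[OF assms(1)] assms(2) in auto)
  ultimately show ?thesis using permutes_image[OF assms(1)] by simp
qed

lemma lehmer_inj:
  assumes \<sigma>: "\<sigma> permutes {1..n}" and \<tau>: "\<tau> permutes {1..n}"
    and eq: "\<forall>R\<in>{1..n}. lehmer n \<sigma> R = lehmer n \<tau> R"
  shows "\<sigma> = \<tau>"
proof (rule ccontr)
  (* at the first row R0 where they differ, \<sigma> R0 and \<tau> R0 have the same rank among the same
     remaining values *)
  assume "\<sigma> \<noteq> \<tau>"
  define D where "D = {R\<in>{1..n}. \<sigma> R \<noteq> \<tau> R}"
  have "D \<noteq> {}"
  proof
    assume "D = {}"
    then have "\<sigma> R = \<tau> R" for R
      using permutes_not_in[OF \<sigma>, of R] permutes_not_in[OF \<tau>, of R] unfolding D_def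
      by (cases "R \<in> {1..n}") auto
    then show False using \<open>\<sigma> \<noteq> \<tau>\<close> by auto
  qed
  define R0 where "R0 = Min D"
  have "finite D" unfolding D_def by simp
  then have R0: "R0 \<in> {1..n}" "\<sigma> R0 \<noteq> \<tau> R0"
    using Min_in[OF _ \<open>D \<noteq> {}\<close>] unfolding R0_def D_def by auto
  have "\<sigma> ` {1..<R0} = \<tau> ` {1..<R0}"
  proof (rule image_cong[OF refl])
    fix R assume "R \<in> {1..<R0}"
    then show "\<sigma> R = \<tau> R"
      using Min_le[OF \<open>finite D\<close>, of R] R0(1) unfolding R0_def D_def by fastforce
  qed
  then have same_tail: "\<sigma> ` {R0..n} = \<tau> ` {R0..n}"
    using permutes_image_atLeastAtMost[OF \<sigma> R0(1)] permutes_image_atLeastAtMost[OF \<tau> R0(1)] by simp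
  have "rank_in (\<sigma> ` {R0..n}) (\<sigma> R0) = lehmer n \<sigma> R0"
    by (rule lehmer_eq_rank_in_atLeast[OF permutes_inj[OF \<sigma>], symmetric])
  also have "\<dots> = lehmer n \<tau> R0" using eq R0(1) by blast
  also have "\<dots> = rank_in (\<sigma> ` {R0..n}) (\<tau> R0)"
    unfolding same_tail by (rule lehmer_eq_rank_in_atLeast[OF permutes_inj[OF \<tau>]])
  finally have "rank_in (\<sigma> ` {R0..n}) (\<sigma> R0) = rank_in (\<sigma> ` {R0..n}) (\<tau> R0)" .
  moreover have "\<sigma> R0 \<in> \<sigma> ` {R0..n}" "\<tau> R0 \<in> \<sigma> ` {R0..n}" using R0(1) same_tail by auto
  ultimately have "\<sigma> R0 = \<tau> R0" using inj_on_rank_in[of "\<sigma> ` {R0..n}"] by (auto dest: inj_onD)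
  then show False using R0(2) by simp
qed

lemma prod_Suc_diff_eq_fact: "(\<Prod>R\<in>{1..n}. Suc (n - R)) = fact n"
proof -
  have "(\<Prod>R\<in>{1..n}. Suc (n - R)) = (\<Prod>R\<in>{1..n}. Suc (n - (n + 1 - R)))"
    by (subst prod.atLeastAtMost_rev) simp
  also have "\<dots> = \<Prod>{1..n}" by (rule prod.cong) auto
  also have "\<dots> = fact n" by (simp add: fact_prod)
  finally show ?thesis .
qed

lemma lehmer_surj:
  assumes "\<forall>R\<in>{1..n}. g R \<le> n - R"
  obtains \<sigma> where "\<sigma> permutes {1..n}" "\<forall>R\<in>{1..n}. lehmer n \<sigma> R = g R"
proof -
  define P where "P = {\<sigma>. \<sigma> permutes {1..n}}"
  define T where "T = (\<Pi>\<^sub>E R\<in>{1..n}. {..n - R})"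
  define code where "code \<sigma> = restrict (lehmer n \<sigma>) {1..n}" for \<sigma>
  (* code maps the n! permutations injectively into T, which also has n! elements *)
  have "inj_on code P"
  proof (rule inj_onI)
    fix \<sigma> \<tau> assume "\<sigma> \<in> P" "\<tau> \<in> P" "code \<sigma> = code \<tau>"
    then have "\<forall>R\<in>{1..n}. lehmer n \<sigma> R = lehmer n \<tau> R" unfolding code_def by (metis restrict_apply')
    then show "\<sigma> = \<tau>" using \<open>\<sigma> \<in> P\<close> \<open>\<tau> \<in> P\<close> lehmer_inj unfolding P_def by blast
  qed
  then have "card (code ` P) = fact n"
    using card_permutations[of "{1..n}" n] by (simp add: card_image P_def)
  moreover have "card T = (\<Prod>R\<in>{1..n}. Suc (n - R))"
    unfolding T_def by (simp add: card_PiE)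
  moreover have "code ` P \<subseteq> T" using lehmer_le by (auto simp: code_def T_def)
  ultimately have "code ` P = T"
    unfolding prod_Suc_diff_eq_fact T_def by (intro card_subset_eq) (auto simp: finite_PiE)
  moreover have "restrict g {1..n} \<in> T" using assms by (auto simp: T_def)
  ultimately obtain \<sigma> where "\<sigma> \<in> P" "code \<sigma> = restrict g {1..n}" by (metis imageE)
  moreover have "\<forall>R\<in>{1..n}. lehmer n \<sigma> R = g R"
    using \<open>code \<sigma> = restrict g {1..n}\<close> unfolding code_def by (metis restrict_apply')
  ultimately show thesis using that unfolding P_def by blast
qed

lemma permutes_of_bijective_relation:
  assumes rows: "\<And>i. i \<in> I \<Longrightarrow> \<exists>!j. j \<in> I \<and> P i j"
    and cols: "\<And>j. j \<in> I \<Longrightarrow> \<exists>!i. i \<in> I \<and> P i j"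
  shows "\<exists>\<sigma>. \<sigma> permutes I \<and> (\<forall>i\<in>I. \<forall>j\<in>I. P i j \<longleftrightarrow> j = \<sigma> i)"
proof -
  define \<sigma> where "\<sigma> i = (if i \<in> I then THE j. j \<in> I \<and> P i j else i)" for i
  have \<sigma>: "\<sigma> i \<in> I \<and> P i (\<sigma> i)" if "i \<in> I" for i
    using theI'[OF rows[OF that]] that unfolding \<sigma>_def by simp
  have graph: "P i j \<longleftrightarrow> j = \<sigma> i" if "i \<in> I" "j \<in> I" for i j
    using rows[OF that(1)] \<sigma>[OF that(1)] that(2) by blast
  have "bij_betw \<sigma> I I"
  proof (rule bij_betwI')
    show "\<sigma> x = \<sigma> y \<longleftrightarrow> x = y" if "x \<in> I" "y \<in> I" for x y
      using cols[of "\<sigma> x"] \<sigma>[OF that(1)] \<sigma>[OF that(2)] that by metis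
    show "\<exists>x\<in>I. y = \<sigma> x" if "y \<in> I" for y
      using cols[OF that] graph that by blast
  qed (use \<sigma> in blast)
  then have "\<sigma> permutes I" by (rule bij_imp_permutes) (simp add: \<sigma>_def)
  then show ?thesis using graph by blast
qed

lemma greaterThanAtMost_subset_atLeastAtMost_one: "{m<..n} \<subseteq> {1..n::nat}"
  by auto

definition neutral_matrix :: "nat \<Rightarrow> (nat \<Rightarrow> nat) \<Rightarrow> nat \<Rightarrow> nat \<Rightarrow> nat \<Rightarrow> nat \<Rightarrow> int" where
  "neutral_matrix n \<sigma> r c i j =
     (if i = r then of_bool (j = c)
      else if i = Suc r then of_bool (j = \<sigma> (Suc r) \<or> j = \<sigma> r) - of_bool (j = c)
      else of_bool (i \<in> {1..n} \<and> j = \<sigma> i))"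

locale neutral_data =
  fixes n :: nat and \<sigma> :: "nat \<Rightarrow> nat" and r c :: nat
  assumes perm: "\<sigma> permutes {1..n}"
    and opening_row_pos: "1 \<le> r"
    and leading_less: "\<sigma> (Suc r) < c"
    and less_closing: "c < \<sigma> r"
    and c_below: "c \<in> \<sigma> ` {Suc r<..n}"
begin

abbreviation "N \<equiv> neutral_matrix n \<sigma> r c"

lemma sigma_eq_iff: "\<sigma> i = \<sigma> i' \<longleftrightarrow> i = i'"
  using permutes_inj[OF perm] by (auto simp: inj_def)

lemma sigma_in_range_iff: "\<sigma> i \<in> {1..n} \<longleftrightarrow> i \<in> {1..n}"
  using permutes_in_image[OF perm] by blast

lemma closing_row_less: "Suc r < n"
  using c_below by auto

lemma c_belowE:
  obtains s where "Suc r < s" "s \<le> n" "\<sigma> s = c"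
  using c_below by auto

lemma in_range: "r \<in> {1..n}" "Suc r \<in> {1..n}" "c \<in> {1..n}" "\<sigma> r \<in> {1..n}" "\<sigma> (Suc r) \<in> {1..n}"
proof -
  show "r \<in> {1..n}" "Suc r \<in> {1..n}" using opening_row_pos closing_row_less by auto
  then show "\<sigma> r \<in> {1..n}" "\<sigma> (Suc r) \<in> {1..n}" using sigma_in_range_iff by blast+
  obtain s where "Suc r < s" "s \<le> n" "\<sigma> s = c" by (rule c_belowE)
  then show "c \<in> {1..n}" using sigma_in_range_iff[of s] by auto
qed

lemma N_opening_row: "N r j = of_bool (j = c)"
  by (simp add: neutral_matrix_def)

lemma N_closing_row: "N (Suc r) j = of_bool (j = \<sigma> (Suc r) \<or> j = \<sigma> r) - of_bool (j = c)"
  by (simp add: neutral_matrix_def)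

lemma N_other_row: "i \<noteq> r \<Longrightarrow> i \<noteq> Suc r \<Longrightarrow> N i j = of_bool (i \<in> {1..n} \<and> j = \<sigma> i)"
  by (simp add: neutral_matrix_def)

lemma N_column_c:
  assumes "\<sigma> s = c" "Suc r < s" "s \<le> n"
  shows "N i c = of_bool (i = r \<or> i = s) - of_bool (i = Suc r)"
  using assms leading_less less_closing in_range sigma_eq_iff[of i s]
  by (auto simp: neutral_matrix_def)

lemma N_other_column:
  assumes "j \<in> {1..n}" "j \<noteq> c"
  obtains t where "t \<in> {1..n}" "\<And>i. N i j = of_bool (i = t)"
proof -
  obtain t where t: "t \<in> {1..n}" "\<sigma> t = j"
    using permutes_image[OF perm] assms(1) by (metis imageE)
  show thesis
  proof (cases "t = r \<or> t = Suc r")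
    case True
    have "N i j = of_bool (i = Suc r)" for i
      using True t assms(2) sigma_eq_iff[of i r] sigma_eq_iff[of i "Suc r"]
      by (auto simp: neutral_matrix_def)
    then show thesis using that in_range(2) by blast
  next
    case False
    have "N i j = of_bool (i = t)" for i
      using False t assms(2) sigma_eq_iff[of i t] sigma_eq_iff[of t "Suc r"] sigma_eq_iff[of t r]
      by (auto simp: neutral_matrix_def)
    then show thesis using that t(1) by blast
  qed
qed

lemma N_closing_row_eq_one_iff: "N (Suc r) j = 1 \<longleftrightarrow> j = \<sigma> (Suc r) \<or> j = \<sigma> r"
  using leading_less less_closing by (auto simp: neutral_matrix_def)

lemma N_eq_minus_one_iff: "N i j = -1 \<longleftrightarrow> i = Suc r \<and> j = c"
  using leading_less less_closing by (auto simp: neutral_matrix_def)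

lemma N_is_asm: "is_asm n N"
  unfolding is_asm_iff_sign_words
proof (intro conjI allI ballI impI)
  show "N i j \<in> {-1, 0, 1}" for i j
    by (simp add: neutral_matrix_def)
  show "N i j = 0" if "i \<notin> {1..n} \<or> j \<notin> {1..n}" for i j
    using that in_range sigma_in_range_iff[of i] by (auto simp: neutral_matrix_def)
  show "alternating (sign_word n (N i))" if "i \<in> {1..n}" for i
  proof -
    consider "i = r" | "i = Suc r" | "i \<noteq> r" "i \<noteq> Suc r" by blast
    then show ?thesis
    proof cases
      case 1
      then show ?thesis
        using in_range by (intro alternating_sign_word_singleI[of c]) (simp_all add: N_opening_row)
    next
      case 2
      then show ?thesis
        using in_range leading_less less_closing
        by (intro alternating_sign_word_tripleI[of "\<sigma> (Suc r)" c "\<sigma> r"])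
          (simp_all add: N_closing_row)
    next
      case 3
      then show ?thesis
        using that sigma_in_range_iff[of i]
        by (intro alternating_sign_word_singleI[of "\<sigma> i"]) (simp_all add: N_other_row)
    qed
  qed
  show "alternating (sign_word n (\<lambda>i. N i j))" if "j \<in> {1..n}" for j
  proof (cases "j = c")
    case True
    obtain s where s: "Suc r < s" "s \<le> n" "\<sigma> s = c" by (rule c_belowE)
    show ?thesis
      unfolding True using opening_row_pos s
      by (intro alternating_sign_word_tripleI[of r "Suc r" s]) (simp_all add: N_column_c)
  next
    case False
    obtain t where "t \<in> {1..n}" "\<And>i. N i j = of_bool (i = t)"
      using N_other_column \<open>j \<in> {1..n}\<close> False by metis
    then show ?thesis by (intro alternating_sign_word_singleI[of t]) simp_all
  qed
qed

lemma minus_pos_N: "minus_pos n N = (Suc r, c)"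
  unfolding minus_pos_def by (rule the_equality) (use in_range in \<open>auto simp: N_eq_minus_one_iff\<close>)

lemma N_asm_one: "N \<in> asm_one n"
proof -
  have "{(i, j). i \<in> {1..n} \<and> j \<in> {1..n} \<and> N i j = -1} = {(Suc r, c)}"
    using in_range by (auto simp: N_eq_minus_one_iff)
  then show ?thesis unfolding asm_one_def using N_is_asm by simp
qed

lemma closing_row_N: "closing_row n N = Suc r"
  and opening_col_N: "opening_col n N = c"
  unfolding closing_row_def opening_col_def minus_pos_N by simp_all

lemma opening_row_N: "opening_row n N = r"
  unfolding opening_row_def closing_row_N opening_col_N
proof (rule the_equality)
  obtain s where s: "Suc r < s" "s \<le> n" "\<sigma> s = c" by (rule c_belowE)
  show "r < Suc r \<and> N r c = 1" by (simp add: N_opening_row)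
  show "i = r" if "i < Suc r \<and> N i c = 1" for i
    using that s by (auto simp: N_column_c)
qed

lemma closing_col_N: "closing_col n N = \<sigma> r"
  unfolding closing_col_def closing_row_N opening_col_N
  by (rule the_equality) (use leading_less less_closing in \<open>auto simp: N_closing_row_eq_one_iff\<close>)

lemma N_asm_one_neutral: "N \<in> asm_one_neutral n"
  unfolding asm_one_neutral_def neutral_def
  using N_asm_one closing_row_N opening_row_N by simp

lemma leading_row_N: "leading_row n N = Suc r"
  unfolding leading_row_def opening_row_N opening_col_N
  by (rule Least_equality) (use leading_less in \<open>auto simp: N_closing_row_eq_one_iff\<close>)

lemma leading_col_N: "leading_col n N = \<sigma> (Suc r)"
  unfolding leading_col_def leading_row_N opening_col_N
  by (rule the_equality) (use leading_less less_closing in \<open>auto simp: N_closing_row_eq_one_iff\<close>)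

lemma one_col_N: "one_col n N R = (if R = r then c else \<sigma> R)" if "R \<in> {1..n}"
proof -
  consider "R = r" | "R = Suc r" | "R \<noteq> r" "R \<noteq> Suc r" by blast
  then show ?thesis
  proof cases
    case 1
    then show ?thesis
      unfolding one_col_def closing_row_N by (auto simp: N_opening_row)
  next
    case 2
    have "(LEAST j. N (Suc r) j = 1) = \<sigma> (Suc r)"
      using leading_less less_closing
      by (intro Least_equality) (auto simp: N_closing_row_eq_one_iff)
    then show ?thesis unfolding one_col_def closing_row_N using 2 by simp
  next
    case 3
    then show ?thesis
      unfolding one_col_def closing_row_N using that by (auto simp: N_other_row)
  qed
qed

definition S :: "nat set" where
  "S = \<sigma> ` {Suc r<..n}"

lemma finite_S: "finite S"
  unfolding S_def by simp

lemma card_S: "card S = n - Suc r"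
  unfolding S_def using sigma_eq_iff by (simp add: card_image inj_on_def)

lemma c_in_S: "c \<in> S"
  unfolding S_def by (rule c_below)

lemma leading_col_notin_S: "\<sigma> (Suc r) \<notin> S"
  unfolding S_def using sigma_eq_iff by auto

lemma card_below_closing_row: "card {i\<in>{Suc r<..n}. P (\<sigma> i)} = card {y\<in>S. P y}"
proof -
  have "{y\<in>S. P y} = \<sigma> ` {i\<in>{Suc r<..n}. P (\<sigma> i)}" unfolding S_def by auto
  then show ?thesis using sigma_eq_iff by (simp add: card_image inj_on_def)
qed

lemma card_below_opening_row:
  "card {i\<in>{r<..n}. P (\<sigma> i)} = of_bool (P (\<sigma> (Suc r))) + card {y\<in>S. P y}"
proof (cases "P (\<sigma> (Suc r))")
  case True
  then have "{i\<in>{r<..n}. P (\<sigma> i)} = insert (Suc r) {i\<in>{Suc r<..n}. P (\<sigma> i)}"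
    using closing_row_less by auto
  then show ?thesis using True card_below_closing_row[of P] by simp
next
  case False
  then have "{i\<in>{r<..n}. P (\<sigma> i)} = {i\<in>{Suc r<..n}. P (\<sigma> i)}"
    by (auto, metis Suc_lessI)
  then show ?thesis using False card_below_closing_row[of P] by simp
qed

(* N is the permutation matrix of \<sigma> plus a correction supported on rows r and Suc r, which
   cancels in every block of rows containing both or neither of them. *)
lemma N_decomp:
  "N i j = of_bool (i \<in> {1..n} \<and> j = \<sigma> i) +
     (of_bool (i = r) - of_bool (i = Suc r)) * (of_bool (j = c) - of_bool (j = \<sigma> r))"
proof -
  consider "i = r" | "i = Suc r" | "i \<noteq> r" "i \<noteq> Suc r" by blast
  then show ?thesis
  proof cases
    case 1
    then show ?thesis using in_range less_closing by (simp add: N_opening_row)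
  next
    case 2
    then show ?thesis using in_range leading_less less_closing by (auto simp: N_closing_row)
  next
    case 3
    then show ?thesis by (simp add: N_other_row)
  qed
qed

lemma sum_N_block:
  assumes "A \<subseteq> {1..n}" "finite J"
  shows "(\<Sum>i\<in>A. \<Sum>j\<in>J. N i j) = int (card {i\<in>A. \<sigma> i \<in> J}) +
    (of_bool (r \<in> A) - of_bool (Suc r \<in> A)) * (of_bool (c \<in> J) - of_bool (\<sigma> r \<in> J))"
proof -
  have "finite A" using assms(1) finite_subset by blast
  have "(\<Sum>j\<in>J. of_bool (i \<in> {1..n} \<and> j = \<sigma> i)) = (of_bool (\<sigma> i \<in> J) :: int)" if "i \<in> A" for i
    using that assms by auto
  then have permutation_part:
    "(\<Sum>i\<in>A. \<Sum>j\<in>J. of_bool (i \<in> {1..n} \<and> j = \<sigma> i)) = int (card {i\<in>A. \<sigma> i \<in> J})"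
    using \<open>finite A\<close> by (simp add: Int_def conj_commute)
  have "(\<Sum>i\<in>A. of_bool (i = r) - of_bool (i = Suc r)) =
      (of_bool (r \<in> A) - of_bool (Suc r \<in> A) :: int)"
    using \<open>finite A\<close> by (simp add: sum_subtractf)
  moreover have "(\<Sum>j\<in>J. of_bool (j = c) - of_bool (j = \<sigma> r)) =
      (of_bool (c \<in> J) - of_bool (\<sigma> r \<in> J) :: int)"
    using assms(2) by (simp add: sum_subtractf)
  ultimately have correction_part:
    "(\<Sum>i\<in>A. \<Sum>j\<in>J. (of_bool (i = r) - of_bool (i = Suc r)) * (of_bool (j = c) - of_bool (j = \<sigma> r))) =
     (of_bool (r \<in> A) - of_bool (Suc r \<in> A)) * (of_bool (c \<in> J) - of_bool (\<sigma> r \<in> J) :: int)"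
    by (simp only: sum_product[symmetric])
  show ?thesis
    unfolding N_decomp sum.distrib permutation_part correction_part ..
qed

lemma ell_N: "ell n N = int (rank_in S c) - int (rank_in S (\<sigma> (Suc r)))"
proof -
  have "ell n N = (\<Sum>i\<in>{r<..n}. \<Sum>j\<in>{\<sigma> (Suc r)<..<c}. N i j)"
    unfolding ell_def opening_row_N leading_col_N opening_col_N ..
  also have "\<dots> = int (card {i\<in>{r<..n}. \<sigma> i \<in> {\<sigma> (Suc r)<..<c}})"
    using sum_N_block[OF greaterThanAtMost_subset_atLeastAtMost_one, of "{\<sigma> (Suc r)<..<c}"]
      closing_row_less less_closing by simp
  also have "\<dots> = int (card {y\<in>S. \<sigma> (Suc r) < y \<and> y < c})"
    using card_below_opening_row[of "\<lambda>y. y \<in> {\<sigma> (Suc r)<..<c}"] by simp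
  also have "\<dots> = int (rank_in S c) - int (rank_in S (\<sigma> (Suc r)))"
  proof -
    have "{y\<in>S. \<sigma> (Suc r) \<le> y \<and> y < c} = {y\<in>S. \<sigma> (Suc r) < y \<and> y < c}"
      using leading_col_notin_S by (auto simp: le_less)
    then show ?thesis
      using rank_in_add_card_between[OF finite_S less_imp_le[OF leading_less]] by simp
  qed
  finally show ?thesis .
qed

lemma cN_N: "cN n N = int (rank_in S (\<sigma> r)) - int (rank_in S c) - 1"
proof -
  have "cN n N = (\<Sum>i\<in>{Suc r<..n}. \<Sum>j\<in>{c<..<\<sigma> r}. N i j)"
    unfolding cN_def closing_row_N opening_col_N closing_col_N ..
  also have "\<dots> = int (card {i\<in>{Suc r<..n}. \<sigma> i \<in> {c<..<\<sigma> r}})"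
    using sum_N_block[OF greaterThanAtMost_subset_atLeastAtMost_one, of "{c<..<\<sigma> r}"] by simp
  also have "\<dots> = int (card {y\<in>S. c < y \<and> y < \<sigma> r})"
    using card_below_closing_row[of "\<lambda>y. y \<in> {c<..<\<sigma> r}"] by simp
  also have "\<dots> = int (rank_in S (\<sigma> r)) - int (rank_in S c) - 1"
  proof -
    have "{y\<in>S. c \<le> y \<and> y < \<sigma> r} = insert c {y\<in>S. c < y \<and> y < \<sigma> r}"
      using c_in_S less_closing by auto
    then show ?thesis
      using rank_in_add_card_between[OF finite_S less_imp_le[OF less_closing]] finite_S by simp
  qed
  finally show ?thesis .
qed

lemma lehmer_closing_row: "lehmer n \<sigma> (Suc r) = rank_in S (\<sigma> (Suc r))"
  unfolding lehmer_def rank_in_def by (rule card_below_closing_row)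

lemma lehmer_opening_row: "lehmer n \<sigma> r = Suc (rank_in S (\<sigma> r))"
  unfolding lehmer_def rank_in_def
  using card_below_opening_row[of "\<lambda>y. y < \<sigma> r"] leading_less less_closing by simp

(* the table entry a_i of N, indexed by its row R = n + 1 - i *)
definition a_row :: "nat \<Rightarrow> nat" where
  "a_row R = (if R = r then Suc (rank_in S c) else lehmer n \<sigma> R)"

lemma a_entry_N: "a_entry n N i = int (a_row (n + 1 - i))" if "i \<in> {1..n}"
proof -
  define R where "R = n + 1 - i"
  define J where "J = one_col n N R"
  have R: "R \<in> {1..n}" using that unfolding R_def by auto
  have correction: "(of_bool (r \<in> {R<..n}) - of_bool (Suc r \<in> {R<..n})) *
      (of_bool (c \<in> {1..<J}) - of_bool (\<sigma> r \<in> {1..<J})) = (0 :: int)"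
  proof (cases "R = r")
    case True
    then show ?thesis using R less_closing by (simp add: J_def one_col_N)
  next
    case False
    then have "r \<in> {R<..n} \<longleftrightarrow> Suc r \<in> {R<..n}" using closing_row_less by auto
    then show ?thesis by simp
  qed
  have "1 \<le> \<sigma> R'" if "R' \<in> {R<..n}" for R'
    using that sigma_in_range_iff[of R'] by auto
  then have "{R'\<in>{R<..n}. \<sigma> R' \<in> {1..<J}} = {R'\<in>{R<..n}. \<sigma> R' < J}"
    by auto
  then have "a_entry n N i = int (card {R'\<in>{R<..n}. \<sigma> R' < J})"
    using sum_N_block[OF greaterThanAtMost_subset_atLeastAtMost_one, of "{1..<J}" R] correction
    unfolding a_entry_def R_def J_def by simp
  also have "card {R'\<in>{R<..n}. \<sigma> R' < J} = a_row R"
  proof (cases "R = r")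
    case True
    then show ?thesis
      using R leading_less card_below_opening_row[of "\<lambda>y. y < c"]
      by (simp add: J_def one_col_N a_row_def rank_in_def)
  next
    case False
    then show ?thesis using R by (simp add: J_def one_col_N a_row_def lehmer_def)
  qed
  finally show ?thesis unfolding R_def .
qed

lemma a_row_le: "a_row R \<le> n - R"
proof (cases "R = r")
  case True
  then show ?thesis
    using rank_in_less_card[OF finite_S c_in_S] card_S by (simp add: a_row_def)
next
  case False
  then show ?thesis using lehmer_le by (simp add: a_row_def)
qed

definition a_table :: "int list" where
  "a_table = map (\<lambda>i. int (a_row (n + 1 - i))) [1..<n+1]"

lemma length_a_table: "length a_table = n"
  by (simp add: a_table_def)

lemma a_table_nth: "j < n \<Longrightarrow> a_table ! j = int (a_row (n - j))"
  unfolding a_table_def by (simp del: upt_Suc add: nth_map_upt)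

lemma a_table_eqI:
  assumes "length a = n" and opening_entry: "a ! (n - r) = int (Suc (rank_in S c))"
    and other_entries: "\<And>R. R \<in> {1..n} \<Longrightarrow> R \<noteq> r \<Longrightarrow> a ! (n - R) = int (lehmer n \<sigma> R)"
  shows "a_table = a"
proof (rule nth_equalityI)
  show "length a_table = length a" using assms(1) length_a_table by simp
  fix j assume "j < length a_table"
  then have j: "j < n" "n - j \<in> {1..n}" "n - (n - j) = j" using length_a_table by auto
  then show "a_table ! j = a ! j"
    using a_table_nth[OF j(1)] opening_entry other_entries[of "n - j"]
    by (cases "n - j = r") (auto simp: a_row_def)
qed

lemma git_N: "git n (N, E) = (int n + 1 - int r, a_table, cN n N, E + ell n N)"
proof -
  have "map (a_entry n N) [1..<n+1] = a_table"
    unfolding a_table_def by (rule map_cong[OF refl], rule a_entry_N) auto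
  then show ?thesis by (simp add: git_def opening_row_N)
qed

lemma lehmer_from_table:
  "int (lehmer n \<sigma> R) = (if R = r then int (a_row r) + cN n N + 1 else int (a_row R))"
  using lehmer_opening_row by (simp add: a_row_def cN_N)

end

lemma asm_one_minus_oneE:
  assumes "A \<in> asm_one n"
  obtains r c where "r \<in> {1..n}" "c \<in> {1..n}" "A r c = -1"
    "\<And>i j. A i j = -1 \<longleftrightarrow> i = r \<and> j = c" "minus_pos n A = (r, c)"
proof -
  have out: "A i j = 0" if "i \<notin> {1..n} \<or> j \<notin> {1..n}" for i j
    using assms that unfolding asm_one_def is_asm_def by blast
  have "card {(i, j). i \<in> {1..n} \<and> j \<in> {1..n} \<and> A i j = -1} = 1"
    using assms unfolding asm_one_def by simp
  then obtain rc where rc: "{(i, j). i \<in> {1..n} \<and> j \<in> {1..n} \<and> A i j = -1} = {rc}"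
    by (rule card_1_singletonE)
  obtain r c where "rc = (r, c)" by fastforce
  with rc have minus_iff: "A i j = -1 \<longleftrightarrow> i = r \<and> j = c" for i j
    using out[of i j] by (cases "i \<in> {1..n} \<and> j \<in> {1..n}") (auto simp: set_eq_iff)
  have rc_range: "r \<in> {1..n}" "c \<in> {1..n}" using rc \<open>rc = (r, c)\<close> by auto
  have "minus_pos n A = (r, c)"
    unfolding minus_pos_def by (rule the_equality) (use rc_range minus_iff in auto)
  then show thesis using that rc_range minus_iff by blast
qed

locale neutral_shape =
  fixes n :: nat and A :: "nat \<Rightarrow> nat \<Rightarrow> int" and h c p q s :: nat
  assumes bounds: "1 \<le> h" "Suc h < s" "s \<le> n" "1 \<le> p" "p < c" "c < q" "q \<le> n"
    and outside: "\<And>i j. i \<notin> {1..n} \<or> j \<notin> {1..n} \<Longrightarrow> A i j = 0"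
    and opening_col_entries:
      "\<And>i. i \<in> {1..n} \<Longrightarrow> A i c = of_bool (i = h \<or> i = s) - of_bool (i = Suc h)"
    and closing_row_entries:
      "\<And>j. j \<in> {1..n} \<Longrightarrow> A (Suc h) j = of_bool (j = p \<or> j = q) - of_bool (j = c)"
    and single_rows:
      "\<And>i. i \<in> {1..n} \<Longrightarrow> i \<noteq> Suc h \<Longrightarrow> \<exists>j0\<in>{1..n}. \<forall>j\<in>{1..n}. A i j = of_bool (j = j0)"
    and single_cols:
      "\<And>j. j \<in> {1..n} \<Longrightarrow> j \<noteq> c \<Longrightarrow> \<exists>i0\<in>{1..n}. \<forall>i\<in>{1..n}. A i j = of_bool (i = i0)"
begin

lemma in_range: "h \<in> {1..n}" "Suc h \<in> {1..n}" "s \<in> {1..n}" "p \<in> {1..n}" "c \<in> {1..n}" "q \<in> {1..n}"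
  using bounds by auto

lemma opening_row_entries: "A h j = of_bool (j = c)"
proof (cases "j \<in> {1..n}")
  case True
  obtain j0 where j0: "j0 \<in> {1..n}" "\<forall>j\<in>{1..n}. A h j = of_bool (j = j0)"
    using single_rows[of h] in_range by auto
  have "A h c = 1" using opening_col_entries in_range by simp
  then have "j0 = c" using bspec[OF j0(2) in_range(5)] by simp
  then show ?thesis using j0 True by simp
next
  case False
  then show ?thesis using outside in_range by auto
qed

(* the permutation hidden in A: the 1 of the opening row moves to the closing column and the
   closing row keeps only its leading 1 *)
definition graph :: "nat \<Rightarrow> nat \<Rightarrow> bool" where
  "graph i j \<longleftrightarrow> (if i = h then j = q else if i = Suc h then j = p else A i j = 1)"

lemma graph_rows:
  assumes "i \<in> {1..n}"
  shows "\<exists>!j. j \<in> {1..n} \<and> graph i j"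
proof -
  consider "i = h" | "i = Suc h" | "i \<noteq> h" "i \<noteq> Suc h" by blast
  then show ?thesis
  proof cases
    case 3
    then obtain j0 where j0: "j0 \<in> {1..n}" "\<forall>j\<in>{1..n}. A i j = of_bool (j = j0)"
      using single_rows[OF assms] by blast
    then have "graph i j \<longleftrightarrow> j = j0" if "j \<in> {1..n}" for j
      using 3 that by (simp add: graph_def)
    then show ?thesis using j0(1) by blast
  qed (use in_range bounds in \<open>auto simp: graph_def\<close>)
qed

lemma graph_cols:
  assumes "j \<in> {1..n}"
  shows "\<exists>!i. i \<in> {1..n} \<and> graph i j"
proof (cases "j = c")
  case True
  have "graph i c \<longleftrightarrow> i = s" if "i \<in> {1..n}" for i
    using that bounds opening_col_entries[OF that] by (auto simp: graph_def)
  then show ?thesis using True in_range by blast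
next
  case False
  obtain i0 where i0: "i0 \<in> {1..n}" "\<forall>i\<in>{1..n}. A i j = of_bool (i = i0)"
    using single_cols[OF assms False] by blast
  have "A (Suc h) j = of_bool (j = p \<or> j = q)" using closing_row_entries[OF assms] False by simp
  then have i0_closing: "i0 = Suc h \<longleftrightarrow> j = p \<or> j = q"
    using i0 in_range by (cases "i0 = Suc h") auto
  have "A h j = 0" using opening_row_entries[of j] False by simp
  then have "i0 \<noteq> h" using i0 in_range by auto
  define i1 where "i1 = (if j = q then h else i0)"
  have "graph i j \<longleftrightarrow> i = i1" if "i \<in> {1..n}" for i
    using that i0 i0_closing \<open>i0 \<noteq> h\<close> bounds unfolding i1_def graph_def by auto
  moreover have "i1 \<in> {1..n}" using i0(1) in_range unfolding i1_def by simp
  ultimately show ?thesis by blast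
qed

lemma graph_permutation_values:
  assumes "\<forall>i\<in>{1..n}. \<forall>j\<in>{1..n}. graph i j \<longleftrightarrow> j = \<sigma> i"
  shows "\<sigma> h = q" "\<sigma> (Suc h) = p" "\<sigma> s = c"
proof -
  have "graph h q" "graph (Suc h) p" "graph s c"
    using bounds opening_col_entries[of s] in_range by (auto simp: graph_def)
  then show "\<sigma> h = q" "\<sigma> (Suc h) = p" "\<sigma> s = c"
    using assms in_range by auto
qed

lemma eq_neutral_matrix:
  assumes perm: "\<sigma> permutes {1..n}" and \<sigma>: "\<forall>i\<in>{1..n}. \<forall>j\<in>{1..n}. graph i j \<longleftrightarrow> j = \<sigma> i"
  shows "A = neutral_matrix n \<sigma> h c"
proof (intro ext)
  fix i j
  note \<sigma>_values = graph_permutation_values[OF \<sigma>]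
  consider "i = h" | "i = Suc h" | "i \<noteq> h" "i \<noteq> Suc h" by blast
  then show "A i j = neutral_matrix n \<sigma> h c i j"
  proof cases
    case 1
    then show ?thesis by (simp add: opening_row_entries neutral_matrix_def)
  next
    case 2
    show ?thesis
    proof (cases "j \<in> {1..n}")
      case True
      then show ?thesis
        using 2 by (simp add: neutral_matrix_def closing_row_entries \<sigma>_values)
    next
      case False
      then have "j \<noteq> p" "j \<noteq> q" "j \<noteq> c" using in_range by auto
      then show ?thesis using 2 False outside by (simp add: neutral_matrix_def \<sigma>_values)
    qed
  next
    case 3
    show ?thesis
    proof (cases "i \<in> {1..n} \<and> j \<in> {1..n}")
      case True
      then obtain j0 where "\<forall>j\<in>{1..n}. A i j = of_bool (j = j0)"
        using single_rows[of i] 3 by blast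
      then have "A i j = of_bool (graph i j)" using True 3 by (simp add: graph_def)
      then show ?thesis using True 3 \<sigma> by (simp add: neutral_matrix_def)
    next
      case False
      then have "A i j = 0" using outside by blast
      moreover have "\<not> (i \<in> {1..n} \<and> j = \<sigma> i)" using False permutes_in_image[OF perm] by blast
      ultimately show ?thesis using 3 by (simp add: neutral_matrix_def)
    qed
  qed
qed

lemma neutral_matrix_form:
  obtains \<sigma> where "neutral_data n \<sigma> h c" "A = neutral_matrix n \<sigma> h c"
proof -
  obtain \<sigma> where perm: "\<sigma> permutes {1..n}"
    and \<sigma>: "\<forall>i\<in>{1..n}. \<forall>j\<in>{1..n}. graph i j \<longleftrightarrow> j = \<sigma> i"
    using permutes_of_bijective_relation[OF graph_rows graph_cols] by blast
  note \<sigma>_values = graph_permutation_values[OF \<sigma>]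
  have "neutral_data n \<sigma> h c"
  proof
    show "c \<in> \<sigma> ` {Suc h<..n}" using \<sigma>_values bounds by (auto intro: rev_image_eqI[of s])
  qed (use perm bounds \<sigma>_values in auto)
  then show thesis using that eq_neutral_matrix[OF perm \<sigma>] by blast
qed

end

lemma asm_one_neutral_shapeE:
  assumes "A \<in> asm_one_neutral n"
  obtains h c p q s where "neutral_shape n A h c p q s"
proof -
  have A1: "A \<in> asm_one n" and "neutral n A" using assms unfolding asm_one_neutral_def by auto
  then have asm: "is_asm n A" unfolding asm_one_def by simp
  have out: "\<And>i j. i \<notin> {1..n} \<or> j \<notin> {1..n} \<Longrightarrow> A i j = 0"
    and rows: "\<And>i. i \<in> {1..n} \<Longrightarrow> alternating (sign_word n (A i))"
    and cols: "\<And>j. j \<in> {1..n} \<Longrightarrow> alternating (sign_word n (\<lambda>i. A i j))"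
    using asm unfolding is_asm_iff_sign_words by blast+
  obtain r c where rc: "r \<in> {1..n}" "c \<in> {1..n}" "A r c = -1"
    and minus_iff: "\<And>i j. A i j = -1 \<longleftrightarrow> i = r \<and> j = c" and "minus_pos n A = (r, c)"
    using asm_one_minus_oneE[OF A1] by blast
  then have closing: "closing_row n A = r" "opening_col n A = c"
    unfolding closing_row_def opening_col_def by simp_all
  obtain h s where hs: "1 \<le> h" "h < r" "r < s" "s \<le> n"
    and col_c: "\<forall>i\<in>{1..n}. A i c = of_bool (i = h \<or> i = s) - of_bool (i = r)"
    by (rule alternating_sign_word_tripleE[of n "\<lambda>i. A i c" r]) (use rows cols rc minus_iff in auto)
  have "opening_row n A = h"
    unfolding opening_row_def closing
  proof (rule the_equality)
    show "h < r \<and> A h c = 1" using hs col_c by auto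
    fix i assume i: "i < r \<and> A i c = 1"
    then have "i \<in> {1..n}" using out[of i c] rc(2) by auto
    then show "i = h" using i hs col_c[rule_format, of i] by (cases "i = h"; cases "i = s") auto
  qed
  then have r_eq: "r = Suc h" using \<open>neutral n A\<close> closing unfolding neutral_def by simp
  obtain p q where pq: "1 \<le> p" "p < c" "c < q" "q \<le> n"
    and row_r: "\<forall>j\<in>{1..n}. A r j = of_bool (j = p \<or> j = q) - of_bool (j = c)"
    by (rule alternating_sign_word_tripleE[of n "A r" c]) (use rows cols rc minus_iff in auto)
  have single_rows: "\<exists>j0\<in>{1..n}. \<forall>j\<in>{1..n}. A i j = of_bool (j = j0)"
    if "i \<in> {1..n}" "i \<noteq> r" for i
    by (rule alternating_sign_word_singleE[of n "A i"]) (use rows cols that minus_iff in auto)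
  have single_cols: "\<exists>i0\<in>{1..n}. \<forall>i\<in>{1..n}. A i j = of_bool (i = i0)"
    if "j \<in> {1..n}" "j \<noteq> c" for j
    by (rule alternating_sign_word_singleE[of n "\<lambda>i. A i j"]) (use rows cols that minus_iff in auto)
  have "neutral_shape n A h c p q s"
  proof
    show "1 \<le> h" "Suc h < s" "s \<le> n" "1 \<le> p" "p < c" "c < q" "q \<le> n"
      using hs pq r_eq by simp_all
  qed (use out col_c row_r single_rows single_cols in \<open>simp_all add: r_eq\<close>)
  then show thesis by (rule that)
qed

definition admissible_table :: "nat \<Rightarrow> int \<Rightarrow> int list \<Rightarrow> int \<Rightarrow> int \<Rightarrow> bool" where
  "admissible_table n k a b \<beta> \<longleftrightarrow>
     3 \<le> k \<and> k \<le> int n \<and>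
     (\<forall>i\<in>{1..n}. 0 \<le> a ! (i - 1) \<and> a ! (i - 1) \<le> int i - 1) \<and>
     a ! (nat k - 2) < a ! (nat k - 1) \<and>
     a ! (nat k - 2) + \<beta> < a ! (nat k - 1) + b \<and>
     a ! (nat k - 1) + b \<le> k - 2"

lemma Nset_neutral_matrixE:
  assumes "(N, E) \<in> Nset n"
  obtains \<sigma> r c where "neutral_data n \<sigma> r c" "N = neutral_matrix n \<sigma> r c"
    "- ell n N \<le> E" "E \<le> cN n N"
proof -
  have "N \<in> asm_one_neutral n" "- ell n N \<le> E" "E \<le> cN n N"
    using assms unfolding Nset_def by auto
  moreover obtain h c p q s where "neutral_shape n N h c p q s"
    using asm_one_neutral_shapeE[OF \<open>N \<in> asm_one_neutral n\<close>] by blast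
  ultimately show thesis using neutral_shape.neutral_matrix_form that by metis
qed

lemma git_admissible:
  assumes "NE \<in> Nset n" and "git n NE = (k, a, b, \<beta>)"
  shows "admissible_table n k a b \<beta>"
proof -
  obtain M E where NE: "NE = (M, E)" by fastforce
  obtain \<sigma> r c where "neutral_data n \<sigma> r c" and M: "M = neutral_matrix n \<sigma> r c"
    and "- ell n M \<le> E" "E \<le> cN n M"
    using assms(1) unfolding NE by (rule Nset_neutral_matrixE)
  interpret neutral_data n \<sigma> r c by fact
  have E: "- ell n N \<le> E" "E \<le> cN n N" using \<open>- ell n M \<le> E\<close> \<open>E \<le> cN n M\<close> unfolding M .
  have git: "k = int n + 1 - int r" "a = a_table" "b = cN n N" "\<beta> = E + ell n N"
    using assms(2) git_N[of E] unfolding NE M by auto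
  have idx: "nat k - 2 = n - Suc r" "nat k - 1 = n - r" "n - (n - Suc r) = Suc r" "n - (n - r) = r"
    using git(1) opening_row_pos closing_row_less by auto
  have a_closing: "a ! (nat k - 2) = int (rank_in S (\<sigma> (Suc r)))"
    using a_table_nth[of "n - Suc r"] closing_row_less unfolding git(2) idx
    by (simp add: a_row_def lehmer_closing_row)
  have a_opening: "a ! (nat k - 1) = int (Suc (rank_in S c))"
    using a_table_nth[of "n - r"] opening_row_pos closing_row_less unfolding git(2) idx
    by (simp add: a_row_def)
  have "rank_in S (\<sigma> (Suc r)) \<le> rank_in S c"
    using rank_in_mono[OF finite_S less_imp_le[OF leading_less]] .
  moreover have "rank_in S (\<sigma> r) \<le> n - Suc r"
    using rank_in_le_card[OF finite_S] card_S by simp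
  moreover have "0 \<le> a ! (i - 1) \<and> a ! (i - 1) \<le> int i - 1" if "i \<in> {1..n}" for i
    using that a_table_nth[of "i - 1"] a_row_le[of "n - (i - 1)"] unfolding git(2) by auto
  ultimately show ?thesis
    unfolding admissible_table_def a_closing a_opening
    using git(1,3,4) E ell_N cN_N opening_row_pos closing_row_less by auto
qed

lemma neutral_data_from_lehmer:
  assumes "1 \<le> r" "Suc r < n" and g: "\<forall>R\<in>{1..n}. g R \<le> n - R"
    and v: "g (Suc r) \<le> v" "v + 1 < g r"
  obtains \<sigma> c where "neutral_data n \<sigma> r c" "\<forall>R\<in>{1..n}. lehmer n \<sigma> R = g R"
    "rank_in (\<sigma> ` {Suc r<..n}) c = v"
proof -
  obtain \<sigma> where perm: "\<sigma> permutes {1..n}" and lehmer_g: "\<forall>R\<in>{1..n}. lehmer n \<sigma> R = g R"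
    using lehmer_surj[OF g] by blast
  define T where "T = \<sigma> ` {Suc r<..n}"
  have "inj \<sigma>" using permutes_inj[OF perm] .
  have "finite T" unfolding T_def by simp
  have "\<sigma> (Suc r) \<notin> T" unfolding T_def using \<open>inj \<sigma>\<close> by (auto simp: inj_eq)
  have rank_p: "rank_in T (\<sigma> (Suc r)) = g (Suc r)"
    using lehmer_eq_rank_in[OF \<open>inj \<sigma>\<close>, of n "Suc r"] lehmer_g assms(2) unfolding T_def by simp
  have "{r<..n} = insert (Suc r) {Suc r<..n}" using assms(2) by auto
  then have "\<sigma> ` {r<..n} = insert (\<sigma> (Suc r)) T" unfolding T_def by simp
  then have rank_q_plus: "rank_in T (\<sigma> r) + of_bool (\<sigma> (Suc r) < \<sigma> r) = g r"
    using lehmer_eq_rank_in[OF \<open>inj \<sigma>\<close>, of n r] lehmer_g assms(1,2)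
      rank_in_insert[OF \<open>finite T\<close> \<open>\<sigma> (Suc r) \<notin> T\<close>] by simp
  have "\<sigma> (Suc r) < \<sigma> r"
  proof (rule ccontr)
    assume "\<not> \<sigma> (Suc r) < \<sigma> r"
    then have "rank_in T (\<sigma> r) \<le> rank_in T (\<sigma> (Suc r))" by (simp add: rank_in_mono[OF \<open>finite T\<close>])
    then show False using \<open>\<not> \<sigma> (Suc r) < \<sigma> r\<close> rank_q_plus rank_p v by simp
  qed
  then have rank_q: "rank_in T (\<sigma> r) = g r - 1" using rank_q_plus by simp
  then have "v < card T" using v rank_in_le_card[OF \<open>finite T\<close>, of "\<sigma> r"] by simp
  then obtain c where "c \<in> T" and rank_c: "rank_in T c = v"
    using rank_in_image[OF \<open>finite T\<close>] by (metis imageE lessThan_iff)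
  have "\<not> c < \<sigma> (Suc r)"
    using rank_in_strict_mono[OF \<open>finite T\<close> \<open>c \<in> T\<close>] rank_p rank_c v by fastforce
  then have "\<sigma> (Suc r) < c" using \<open>c \<in> T\<close> \<open>\<sigma> (Suc r) \<notin> T\<close> by (cases "c = \<sigma> (Suc r)") auto
  moreover have "c < \<sigma> r"
    using rank_in_mono[OF \<open>finite T\<close>, of "\<sigma> r" c] rank_q rank_c v by fastforce
  ultimately have "neutral_data n \<sigma> r c"
    using perm assms(1) \<open>c \<in> T\<close> unfolding T_def by unfold_locales auto
  then show thesis using that lehmer_g rank_c unfolding T_def by blast
qed

lemma admissible_table_opening_rowE:
  assumes "admissible_table n k a b \<beta>"
  obtains r where "k = int n + 1 - int r" "1 \<le> r" "Suc r < n"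
    "nat k - 2 = n - Suc r" "nat k - 1 = n - r"
proof -
  have "3 \<le> nat k" "nat k \<le> n" "int (nat k) = k"
    using assms unfolding admissible_table_def by (auto simp: le_nat_iff nat_le_iff)
  then show thesis using that[of "n + 1 - nat k"] by (auto simp: of_nat_diff)
qed

lemma admissible_table_entry_le:
  assumes "admissible_table n k a b \<beta>" and "R \<in> {1..n}"
  shows "a ! (n - R) \<le> int (n - R)"
proof -
  have "n + 1 - R \<in> {1..n}" "n + 1 - R - 1 = n - R" using assms(2) by auto
  then have "a ! (n - R) \<le> int (n + 1 - R) - 1"
    using assms(1) unfolding admissible_table_def by metis
  then show ?thesis using assms(2) by auto
qed

lemma admissible_git_exists:
  assumes len: "length a = n" and nonneg: "\<forall>x\<in>set a. 0 \<le> x" "0 \<le> b" "0 \<le> \<beta>"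
    and adm: "admissible_table n k a b \<beta>"
  shows "\<exists>NE\<in>Nset n. git n NE = (k, a, b, \<beta>)"
proof -
  obtain r where k: "k = int n + 1 - int r" "1 \<le> r" "Suc r < n"
    "nat k - 2 = n - Suc r" "nat k - 1 = n - r"
    using adm by (rule admissible_table_opening_rowE)
  define ak1 ak where "ak1 = a ! (n - Suc r)" and "ak = a ! (n - r)"
  have a_nonneg: "0 \<le> a ! j" if "j < n" for j using nonneg(1) len that by auto
  have ak: "0 \<le> ak1" "ak1 < ak" "ak1 + \<beta> < ak + b" "ak + b \<le> int (n - Suc r)"
    using adm a_nonneg[of "n - Suc r"] k unfolding admissible_table_def ak1_def ak_def by auto
  define g where "g R = (if R = r then nat (ak + b) + 1 else nat (a ! (n - R)))" for R
  have "\<forall>R\<in>{1..n}. g R \<le> n - R"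
    using ak admissible_table_entry_le[OF adm] k(3) unfolding g_def
    by (auto simp: nat_le_iff of_nat_diff)
  moreover have "g (Suc r) \<le> nat (ak - 1)" "nat (ak - 1) + 1 < g r"
    using ak nonneg unfolding g_def ak1_def by auto
  ultimately obtain \<sigma> c where "neutral_data n \<sigma> r c"
    and lehmer_g: "\<forall>R\<in>{1..n}. lehmer n \<sigma> R = g R"
    and "rank_in (\<sigma> ` {Suc r<..n}) c = nat (ak - 1)"
    using neutral_data_from_lehmer[OF k(2,3)] by blast
  interpret neutral_data n \<sigma> r c by fact
  have rank_c: "rank_in S c = nat (ak - 1)"
    using \<open>rank_in (\<sigma> ` {Suc r<..n}) c = nat (ak - 1)\<close> unfolding S_def .
  have rank_p: "rank_in S (\<sigma> (Suc r)) = nat ak1"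
    using lehmer_closing_row lehmer_g in_range(2) k(3) unfolding g_def ak1_def by simp
  have rank_q: "rank_in S (\<sigma> r) = nat (ak + b)"
    using lehmer_opening_row lehmer_g in_range(1) unfolding g_def by simp
  define E where "E = \<beta> - ell n N"
  have "(N, E) \<in> Nset n"
    using N_asm_one_neutral ell_N cN_N rank_p rank_q rank_c ak nonneg
    unfolding Nset_def E_def by auto
  moreover have "a_table = a"
  proof (rule a_table_eqI[OF len])
    show "a ! (n - r) = int (Suc (rank_in S c))" using rank_c ak unfolding ak_def by simp
    show "a ! (n - R) = int (lehmer n \<sigma> R)" if "R \<in> {1..n}" "R \<noteq> r" for R
      using that lehmer_g a_nonneg[of "n - R"] unfolding g_def by auto
  qed
  moreover have "git n (N, E) = (k, a, b, \<beta>)"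
    using git_N[of E] \<open>a_table = a\<close> k(1) cN_N rank_q rank_c ak nonneg
    unfolding E_def by simp
  ultimately show ?thesis by blast
qed

lemma inj_on_git: "inj_on (git n) (Nset n)"
proof (rule inj_onI)
  fix NE NE' assume "NE \<in> Nset n" "NE' \<in> Nset n" and git_eq: "git n NE = git n NE'"
  obtain M E M' E' where NE: "NE = (M, E)" "NE' = (M', E')" by fastforce
  obtain \<sigma> r c where "neutral_data n \<sigma> r c" and M: "M = neutral_matrix n \<sigma> r c"
    using \<open>NE \<in> Nset n\<close> unfolding NE by (rule Nset_neutral_matrixE)
  obtain \<sigma>' r' c' where "neutral_data n \<sigma>' r' c'" and M': "M' = neutral_matrix n \<sigma>' r' c'"
    using \<open>NE' \<in> Nset n\<close> unfolding NE by (rule Nset_neutral_matrixE)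
  interpret X: neutral_data n \<sigma> r c by fact
  interpret Y: neutral_data n \<sigma>' r' c' by fact
  have eqs: "int n + 1 - int r = int n + 1 - int r'" "X.a_table = Y.a_table"
    "cN n M = cN n M'" "E + ell n M = E' + ell n M'"
    using git_eq X.git_N[of E] Y.git_N[of E'] unfolding NE M M' by auto
  then have "r' = r" by simp
  have a_row_eq: "X.a_row R = Y.a_row R" if "R \<in> {1..n}" for R
    using X.a_table_nth[of "n - R"] Y.a_table_nth[of "n - R"] eqs(2) that by auto
  have "\<forall>R\<in>{1..n}. lehmer n \<sigma> R = lehmer n \<sigma>' R"
    using X.lehmer_from_table Y.lehmer_from_table a_row_eq eqs(3) X.in_range(1) \<open>r' = r\<close>
    unfolding M M' by (metis of_nat_eq_iff)
  then have "\<sigma>' = \<sigma>" using lehmer_inj[OF Y.perm X.perm] by simp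
  then have "Y.S = X.S" using \<open>r' = r\<close> by (simp add: X.S_def Y.S_def)
  moreover have "rank_in X.S c = rank_in Y.S c'"
  proof -
    have "X.a_row r = Suc (rank_in X.S c)" "Y.a_row r' = Suc (rank_in Y.S c')"
      by (simp_all add: X.a_row_def Y.a_row_def)
    then show ?thesis using a_row_eq[OF X.in_range(1)] \<open>r' = r\<close> by simp
  qed
  ultimately have "c' = c"
    using inj_on_rank_in[OF X.finite_S] X.c_in_S Y.c_in_S by (auto dest: inj_onD)
  have "M' = M" unfolding M M' \<open>\<sigma>' = \<sigma>\<close> \<open>r' = r\<close> \<open>c' = c\<close> ..
  then show "NE = NE'" using eqs(4) unfolding NE by simp
qed

theorem lemma4:
  fixes n :: nat and k b \<beta> :: int and a :: "int list"
  assumes "length a = n" and "0 \<le> k" and "\<forall>x\<in>set a. 0 \<le> x" and "0 \<le> b" and "0 \<le> \<beta>"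
  shows "((\<exists>NE\<in>Nset n. git n NE = (k, a, b, \<beta>)) \<longleftrightarrow>
           (3 \<le> k \<and> k \<le> int n \<and>
            (\<forall>i\<in>{1..n}. 0 \<le> a ! (i - 1) \<and> a ! (i - 1) \<le> int i - 1) \<and>
            a ! (nat k - 2) < a ! (nat k - 1) \<and>
            a ! (nat k - 2) + \<beta> < a ! (nat k - 1) + b \<and>
            a ! (nat k - 1) + b \<le> k - 2)) \<and>
         (\<forall>NE\<in>Nset n. \<forall>NE'\<in>Nset n.
           git n NE = (k, a, b, \<beta>) \<longrightarrow> git n NE' = (k, a, b, \<beta>) \<longrightarrow> NE = NE')"
proof -
  have "(\<exists>NE\<in>Nset n. git n NE = (k, a, b, \<beta>)) \<longleftrightarrow> admissible_table n k a b \<beta>"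
    using git_admissible admissible_git_exists[OF assms(1,3-5)] by blast
  moreover have "\<forall>NE\<in>Nset n. \<forall>NE'\<in>Nset n.
      git n NE = (k, a, b, \<beta>) \<longrightarrow> git n NE' = (k, a, b, \<beta>) \<longrightarrow> NE = NE'"
    using inj_on_git[of n] unfolding inj_on_def by metis
  ultimately show ?thesis unfolding admissible_table_def by blast
qed

end
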